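(* Let $r,d,\mu_C:[0,\infty)\to\mathbb{R}$ be Lipschitz continuous with $r(0)>d(0)>0$, $r'<0$, $r(+\infty)=0$, $d'>0$, and $\mu_C>0$, $\mu_C'<0$, $\mu_C(\infty)=0$. Take the constant dose $c\equiv 1$ and assume there is $x_c>0$ such that $$r(x)-d(x)-c\mu_C(x)<\overline{R_c}:=r(x_c)-d(x_c)-c\mu_C(x_c)\quad\text{for all } x\neq x_c,\qquad \overline{R_c}>0.$$ Let $n_C^0>0$ be an integrable initial datum on $[0,\infty)$ and $n_C$ the solution of $$\frac{\partial}{\partial t}n_C(x,t)=\big[r(x)-d(x)-c\,\mu_C(x)\big]n_C(x,t),\qquad n_C(x,0)=n_C^0(x)$$ (the cancer-cell model with no mutations, $\theta_C=0$). Set $\rho_C(t)=\int_0^\infty n_C(x,t)\,dx$. Then $\rho_C(t)\to\infty$ as $t\to\infty$ with an exponential rate, and $\dfrac{n_C(\cdot,t)}{\rho_C(t)}\to\delta(x-x_c)$ as $t\to\infty$, weakly in the sense of measures.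
   Context: $n_C(x,t)$ is the density of cancer cells with resistance-gene expression level $x\ge0$; $r$, $d$ are birth and death rates, $c$ the (constant) drug dose and $\mu_C(x)$ the drug-induced death rate of cancer cells with level $x$. $\delta(x-x_c)$ is the Dirac mass at $x_c$. *)

theory Defs
  imports "HOL-Analysis.Analysis"
begin

end

theory Submission
  imports Defs "HOL-Real_Asymp.Real_Asymp"
begin

text \<open>
  Without mutations every trait evolves independently, so
  \<open>n(x,t) = exp (R x * t) * n\<^sub>0 x\<close> with the net growth rate \<open>R = r - d - c \<mu>\<close>.
  The rate \<open>R\<close> is continuous, has its strict maximum \<open>R x\<^sub>c > 0\<close> at \<open>x\<^sub>c\<close> and is negative
  for large \<open>x\<close>, so away from \<open>x\<^sub>c\<close> it stays below some \<open>m < R x\<^sub>c\<close>. Laplace's method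
  then applies: the mass near \<open>x\<^sub>c\<close> grows at least like \<open>exp (\<beta> t)\<close> for every
  \<open>\<beta> < R x\<^sub>c\<close>, while the mass away from \<open>x\<^sub>c\<close> is \<open>O(exp (m t))\<close>, so the normalized
  density concentrates at \<open>x\<^sub>c\<close>.
\<close>

lemma set_integrable_bounded_continuous_mult:
  fixes f g :: "real \<Rightarrow> real"
  assumes f: "set_integrable lborel A f" and A: "A \<in> sets borel"
    and g: "continuous_on A g" and bound: "\<forall>x\<in>A. \<bar>g x\<bar> \<le> B"
  shows "set_integrable lborel A (\<lambda>x. g x * f x)"
proof -
  have fi: "integrable lborel (\<lambda>x. indicator A x *\<^sub>R f x)"
    using f unfolding set_integrable_def .
  have "(\<lambda>x. indicator A x *\<^sub>R g x) \<in> borel_measurable borel"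
    by (rule borel_measurable_continuous_on_indicator[OF A g])
  moreover have "(\<lambda>x. indicator A x *\<^sub>R f x) \<in> borel_measurable borel"
    using fi by (simp add: borel_measurable_integrable)
  moreover have "(\<lambda>x. indicator A x *\<^sub>R (g x * f x))
      = (\<lambda>x. (indicator A x *\<^sub>R g x) * (indicator A x *\<^sub>R f x))"
    by (auto simp: indicator_def fun_eq_iff)
  ultimately have meas: "(\<lambda>x. indicator A x *\<^sub>R (g x * f x)) \<in> borel_measurable lborel"
    by simp
  show ?thesis unfolding set_integrable_def
  proof (rule Bochner_Integration.integrable_bound[OF integrable_scaleR_right[OF fi, of B] meas])
    show "AE x in lborel. norm (indicator A x *\<^sub>R (g x * f x)) \<le> norm (B *\<^sub>R (indicator A x *\<^sub>R f x))"
      using bound by (intro AE_I2)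
        (auto simp: indicator_def abs_mult intro!: mult_right_mono order.trans[OF _ abs_ge_self[of B]])
  qed
qed

lemma set_integral_pos_if_pos_on_interval:
  fixes f :: "real \<Rightarrow> real"
  assumes f: "set_integrable lborel A f" and nonneg: "\<forall>x\<in>A. 0 \<le> f x"
    and sub: "{a<..<b} \<subseteq> A" and pos: "\<forall>x\<in>{a<..<b}. 0 < f x" and "a < b"
  shows "0 < (LINT x:A|lborel. f x)"
proof -
  have fi: "integrable lborel (\<lambda>x. indicator A x *\<^sub>R f x)"
    using f unfolding set_integrable_def .
  have nonneg_AE: "AE x in lborel. 0 \<le> indicator A x *\<^sub>R f x"
    using nonneg by (auto simp: indicator_def)
  have "0 \<le> (LINT x:A|lborel. f x)"
    unfolding set_lebesgue_integral_def using nonneg_AE by (simp add: integral_nonneg_AE)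
  moreover have "(LINT x:A|lborel. f x) \<noteq> 0"
  proof
    assume "(LINT x:A|lborel. f x) = 0"
    then have "AE x in lborel. indicator A x *\<^sub>R f x = 0"
      using integral_nonneg_eq_0_iff_AE[OF fi nonneg_AE] unfolding set_lebesgue_integral_def by simp
    then have "AE x in lborel. x \<notin> {a<..<b}"
      by eventually_elim (use sub pos in \<open>force simp: indicator_def split: if_splits\<close>)
    then have "emeasure lborel {a<..<b} = 0"
      by (subst (asm) AE_iff_measurable[of "{a<..<b}"]) auto
    with \<open>a < b\<close> show False by simp
  qed
  ultimately show ?thesis by simp
qed

lemma nondecreasing_if_derivative_within_nonneg:
  fixes f :: "real \<Rightarrow> real"
  assumes "a \<le> b" and "{a..b} \<subseteq> S"
    and deriv: "\<forall>x\<in>{a..b}. \<exists>D\<ge>0. (f has_real_derivative D) (at x within S)"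
  shows "f a \<le> f b"
proof -
  obtain D where D: "\<forall>x\<in>{a..b}. D x \<ge> 0 \<and> (f has_real_derivative D x) (at x within S)"
    using deriv by metis
  have "\<exists>z\<in>{a..b}. f b - f a = (\<lambda>h. D z * h) (b - a)"
  proof (rule mvt_very_simple[OF \<open>a \<le> b\<close>])
    fix x assume "a \<le> x" "x \<le> b"
    then have "(f has_real_derivative D x) (at x within {a..b})"
      using D \<open>{a..b} \<subseteq> S\<close> by (auto intro: DERIV_subset)
    then show "(f has_derivative (\<lambda>h. D x * h)) (at x within {a..b})"
      by (simp add: has_field_derivative_imp_has_derivative)
  qed
  then obtain z where "z \<in> {a..b}" "f b - f a = D z * (b - a)" by auto
  with D \<open>a \<le> b\<close> show ?thesis by (smt (verit) mult_nonneg_nonneg)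
qed

lemma linear_ode_solution:
  fixes f :: "real \<Rightarrow> real"
  assumes ode: "\<forall>s\<ge>0. (f has_real_derivative a * f s) (at s within {0..})" and "t \<ge> 0"
  shows "f t = exp (a * t) * f 0"
proof -
  define g where "g s = f s * exp (- a * s)" for s
  have "\<exists>k. \<forall>s\<in>{0..}. g s = k"
  proof (rule has_field_derivative_zero_constant)
    fix s :: real assume "s \<in> {0..}"
    then have "(g has_real_derivative a * f s * exp (- a * s) + f s * (exp (- a * s) * - a))
        (at s within {0..})"
      using ode unfolding g_def by (auto intro!: derivative_eq_intros)
    then show "(g has_real_derivative 0) (at s within {0..})"
      by (simp add: algebra_simps)
  qed simp
  then have "g t = g 0" using \<open>t \<ge> 0\<close> by fastforce
  then have "f t = f 0 * exp (a * t)"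
    unfolding g_def by (simp add: exp_minus field_simps)
  then show ?thesis by simp
qed

lemma continuous_strict_max_gap:
  fixes R :: "real \<Rightarrow> real"
  assumes cont: "continuous_on {0..} R"
    and strict_max: "\<forall>x\<ge>0. x \<noteq> xc \<longrightarrow> R x < R xc"
    and low: "b < R xc" "\<forall>\<^sub>F x in at_top. R x \<le> b"
    and "\<delta> > 0"
  shows "\<exists>m<R xc. \<forall>x\<ge>0. \<delta> \<le> \<bar>x - xc\<bar> \<longrightarrow> R x \<le> m"
proof -
  obtain M where M: "\<forall>x\<ge>M. R x \<le> b"
    using low(2) by (auto simp: eventually_at_top_linorder)
  define K where "K = {0..max M 0} \<inter> {x. \<delta> \<le> \<bar>x - xc\<bar>}"
  have outside_K: "R x \<le> b" if "x \<ge> 0" "\<delta> \<le> \<bar>x - xc\<bar>" "x \<notin> K" for x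
    using that M by (auto simp: K_def)
  show ?thesis
  proof (cases "K = {}")
    case True
    then show ?thesis using low(1) outside_K by blast
  next
    case False
    have "compact K" unfolding K_def
      by (intro compact_Int_closed compact_Icc closed_Collect_le continuous_intros)
    moreover have "continuous_on K R"
      using cont by (rule continuous_on_subset) (auto simp: K_def)
    ultimately obtain x0 where x0: "x0 \<in> K" "\<forall>y\<in>K. R y \<le> R x0"
      using continuous_attains_sup False by blast
    have "R x0 < R xc"
      using x0(1) \<open>\<delta> > 0\<close> strict_max by (auto simp: K_def)
    then show ?thesis
      using low(1) x0(2) outside_K by (intro exI[of _ "max (R x0) b"]) force
  qed
qed

locale peaked_growth =
  fixes R n0 :: "real \<Rightarrow> real" and xc :: real
  assumes R_cont: "continuous_on {0..} R"
    and xc_pos: "xc > 0"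
    and R_strict_max: "\<forall>x\<ge>0. x \<noteq> xc \<longrightarrow> R x < R xc"
    and R_eventually_low: "\<exists>b<R xc. \<forall>\<^sub>F x in at_top. R x \<le> b"
    and n0_pos: "\<forall>x\<ge>0. n0 x > 0"
    and n0_int: "set_integrable lborel {0..} n0"
begin

definition weight :: "real \<Rightarrow> real \<Rightarrow> real"
  where "weight t x = exp (R x * t) * n0 x"

definition mass :: "real \<Rightarrow> real"
  where "mass t = (LINT x:{0..}|lborel. weight t x)"

definition moment :: "(real \<Rightarrow> real) \<Rightarrow> real \<Rightarrow> real"
  where "moment \<phi> t = (LINT x:{0..}|lborel. \<phi> x * weight t x)"

lemma R_le_peak: "x \<ge> 0 \<Longrightarrow> R x \<le> R xc"
  using R_strict_max by (cases "x = xc") auto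

lemma gap:
  assumes "\<delta> > 0"
  shows "\<exists>m<R xc. \<forall>x\<ge>0. \<delta> \<le> \<bar>x - xc\<bar> \<longrightarrow> R x \<le> m"
  using R_eventually_low continuous_strict_max_gap[OF R_cont R_strict_max _ _ assms] by blast

lemma weight_nonneg: "x \<ge> 0 \<Longrightarrow> 0 \<le> weight t x"
  using n0_pos by (simp add: weight_def less_imp_le)

lemma integrable_bounded_continuous_weight:
  assumes "t \<ge> 0" and "continuous_on {0..} \<phi>" and "\<forall>x\<ge>0. \<bar>\<phi> x\<bar> \<le> B"
  shows "set_integrable lborel {0..} (\<lambda>x. \<phi> x * weight t x)"
proof -
  have "set_integrable lborel {0..} (\<lambda>x. (\<phi> x * exp (R x * t)) * n0 x)"
  proof (rule set_integrable_bounded_continuous_mult[OF n0_int, where B = "B * exp (R xc * t)"])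
    show "continuous_on {0..} (\<lambda>x. \<phi> x * exp (R x * t))"
      using R_cont assms(2) by (intro continuous_intros)
    show "\<forall>x\<in>{0..}. \<bar>\<phi> x * exp (R x * t)\<bar> \<le> B * exp (R xc * t)"
      using R_le_peak assms(1,3) by (auto simp: abs_mult intro!: mult_mono mult_right_mono)
  qed simp
  then show ?thesis by (simp add: weight_def mult.assoc)
qed

lemma integrable_weight: "t \<ge> 0 \<Longrightarrow> set_integrable lborel {0..} (weight t)"
  using integrable_bounded_continuous_weight[of t "\<lambda>_. 1" 1] by simp

text \<open>The bump \<open>\<psi>\<close> supported where \<open>R > \<beta>\<close> gives the lower bound with \<open>J = \<integral> \<psi> n\<^sub>0 > 0\<close>.\<close>

lemma mass_lower_bound:
  assumes "\<beta> < R xc"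
  shows "\<exists>J>0. \<forall>t\<ge>0. J * exp (\<beta> * t) \<le> mass t"
proof -
  obtain \<delta>0 where \<delta>0: "\<delta>0 > 0" "\<forall>x\<in>{0..}. dist x xc < \<delta>0 \<longrightarrow> dist (R x) (R xc) < R xc - \<beta>"
    using R_cont assms xc_pos unfolding continuous_on_iff by (metis atLeast_iff diff_gt_0_iff_gt less_imp_le)
  define \<delta> where "\<delta> = min \<delta>0 xc"
  have "\<delta> > 0" using \<delta>0 xc_pos by (simp add: \<delta>_def)
  have R_above: "\<beta> < R x" if "\<bar>x - xc\<bar> < \<delta>" for x
  proof -
    have "x \<ge> 0" "dist x xc < \<delta>0" using that by (auto simp: \<delta>_def dist_real_def)
    then show ?thesis using \<delta>0(2) by (force simp: dist_real_def)
  qed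
  define \<psi> where "\<psi> x = max 0 (1 - \<bar>x - xc\<bar> / \<delta>)" for x
  have \<psi>_bounds: "0 \<le> \<psi> x" "\<psi> x \<le> 1" for x
    using \<open>\<delta> > 0\<close> by (auto simp: \<psi>_def)
  have \<psi>_int: "set_integrable lborel {0..} (\<lambda>x. \<psi> x * n0 x)"
  proof (rule set_integrable_bounded_continuous_mult[OF n0_int, where B = 1])
    show "continuous_on {0..} \<psi>"
      unfolding \<psi>_def[abs_def] using \<open>\<delta> > 0\<close> by (intro continuous_intros) auto
  qed (use \<psi>_bounds in auto)
  define J where "J = (LINT x:{0..}|lborel. \<psi> x * n0 x)"
  have "J > 0" unfolding J_def
  proof (rule set_integral_pos_if_pos_on_interval[OF \<psi>_int, of "xc - \<delta>" "xc + \<delta>"])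
    show "\<forall>x\<in>{xc - \<delta><..<xc + \<delta>}. 0 < \<psi> x * n0 x"
    proof
      fix x assume "x \<in> {xc - \<delta><..<xc + \<delta>}"
      then have "\<bar>x - xc\<bar> < \<delta>" "x \<ge> 0" by (auto simp: \<delta>_def)
      then show "0 < \<psi> x * n0 x" using n0_pos \<open>\<delta> > 0\<close> by (simp add: \<psi>_def)
    qed
  qed (use n0_pos \<psi>_bounds \<open>\<delta> > 0\<close> in \<open>auto simp: \<delta>_def less_imp_le\<close>)
  moreover have "J * exp (\<beta> * t) \<le> mass t" if "t \<ge> 0" for t
  proof -
    have "J * exp (\<beta> * t) = (LINT x:{0..}|lborel. \<psi> x * n0 x * exp (\<beta> * t))"
      unfolding J_def by simp
    also have "\<dots> \<le> mass t"
      unfolding mass_def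
    proof (rule set_integral_mono)
      show "set_integrable lborel {0..} (\<lambda>x. \<psi> x * n0 x * exp (\<beta> * t))"
        using \<psi>_int by (rule set_integrable_mult_left)
      show "set_integrable lborel {0..} (weight t)"
        using integrable_weight \<open>t \<ge> 0\<close> .
      fix x :: real assume "x \<in> {0..}"
      then have "n0 x > 0" using n0_pos by simp
      have "\<psi> x * exp (\<beta> * t) \<le> exp (R x * t)"
      proof (cases "\<bar>x - xc\<bar> < \<delta>")
        case True
        then have "exp (\<beta> * t) \<le> exp (R x * t)"
          using R_above[OF True] \<open>t \<ge> 0\<close> by (simp add: mult_right_mono)
        then show ?thesis using \<psi>_bounds[of x] by (meson exp_ge_zero mult_left_le_one_le order.trans)
      next
        case False
        then have "\<psi> x = 0" using \<open>\<delta> > 0\<close> by (simp add: \<psi>_def)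
        then show ?thesis by simp
      qed
      then show "\<psi> x * n0 x * exp (\<beta> * t) \<le> weight t x"
        using \<open>n0 x > 0\<close> by (simp add: weight_def mult.commute mult.left_commute)
    qed
    finally show ?thesis .
  qed
  ultimately show ?thesis by blast
qed

lemma moment_error_bound:
  assumes "t \<ge> 0" and \<phi>_cont: "continuous_on {0..} \<phi>" and \<phi>_bound: "\<forall>x\<ge>0. \<bar>\<phi> x\<bar> \<le> B"
    and near: "\<forall>x\<ge>0. \<bar>x - xc\<bar> < \<delta> \<longrightarrow> \<bar>\<phi> x - \<phi> xc\<bar> \<le> \<epsilon>"
    and far: "\<forall>x\<ge>0. \<delta> \<le> \<bar>x - xc\<bar> \<longrightarrow> R x \<le> m" and "0 \<le> \<epsilon>"
  shows "\<bar>moment \<phi> t - \<phi> xc * mass t\<bar>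
    \<le> \<epsilon> * mass t + 2 * B * exp (m * t) * (LINT x:{0..}|lborel. n0 x)"
proof -
  have int_w: "set_integrable lborel {0..} (weight t)"
    using integrable_weight \<open>t \<ge> 0\<close> .
  have int_\<phi>w: "set_integrable lborel {0..} (\<lambda>x. \<phi> x * weight t x)"
    using integrable_bounded_continuous_weight \<open>t \<ge> 0\<close> \<phi>_cont \<phi>_bound .
  have int_diff: "set_integrable lborel {0..} (\<lambda>x. (\<phi> x - \<phi> xc) * weight t x)"
    using set_integral_diff(1)[OF int_\<phi>w set_integrable_mult_right[OF int_w, of "\<phi> xc"]]
    by (simp add: left_diff_distrib)
  have int_bound: "set_integrable lborel {0..} (\<lambda>x. \<epsilon> * weight t x + 2 * B * exp (m * t) * n0 x)"
    using int_w n0_int by (intro set_integral_add set_integrable_mult_right)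
  have B_nonneg: "0 \<le> B" using \<phi>_bound[rule_format, of xc] xc_pos by linarith
  have pointwise: "\<bar>(\<phi> x - \<phi> xc) * weight t x\<bar> \<le> \<epsilon> * weight t x + 2 * B * exp (m * t) * n0 x"
    if "x \<ge> 0" for x
  proof -
    have "0 \<le> weight t x" "0 \<le> n0 x" "0 \<le> 2 * B * exp (m * t)"
      using weight_nonneg n0_pos B_nonneg \<open>x \<ge> 0\<close> by (auto simp: less_imp_le)
    have abs_eq: "\<bar>(\<phi> x - \<phi> xc) * weight t x\<bar> = \<bar>\<phi> x - \<phi> xc\<bar> * weight t x"
      using \<open>0 \<le> weight t x\<close> by (simp add: abs_mult)
    show ?thesis
    proof (cases "\<bar>x - xc\<bar> < \<delta>")
      case True
      then have "\<bar>\<phi> x - \<phi> xc\<bar> * weight t x \<le> \<epsilon> * weight t x"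
        using near \<open>x \<ge> 0\<close> \<open>0 \<le> weight t x\<close> by (intro mult_right_mono) auto
      moreover have "0 \<le> 2 * B * exp (m * t) * n0 x"
        using \<open>0 \<le> 2 * B * exp (m * t)\<close> \<open>0 \<le> n0 x\<close> by simp
      ultimately show ?thesis unfolding abs_eq by linarith
    next
      case False
      have "\<bar>\<phi> x - \<phi> xc\<bar> \<le> 2 * B"
        using \<phi>_bound \<open>x \<ge> 0\<close> xc_pos by (smt (verit))
      moreover have "exp (R x * t) \<le> exp (m * t)"
        using False far \<open>x \<ge> 0\<close> \<open>t \<ge> 0\<close> by (auto intro: mult_right_mono)
      ultimately have "\<bar>\<phi> x - \<phi> xc\<bar> * exp (R x * t) \<le> 2 * B * exp (m * t)"
        using B_nonneg by (intro mult_mono) auto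
      then have "\<bar>\<phi> x - \<phi> xc\<bar> * exp (R x * t) * n0 x \<le> 2 * B * exp (m * t) * n0 x"
        using \<open>0 \<le> n0 x\<close> by (rule mult_right_mono)
      moreover have "0 \<le> \<epsilon> * weight t x"
        using \<open>0 \<le> \<epsilon>\<close> \<open>0 \<le> weight t x\<close> by simp
      ultimately show ?thesis unfolding abs_eq by (simp add: weight_def mult.assoc)
    qed
  qed
  have "moment \<phi> t - \<phi> xc * mass t = (LINT x:{0..}|lborel. (\<phi> x - \<phi> xc) * weight t x)"
    using int_\<phi>w int_w
    by (simp add: moment_def mass_def left_diff_distrib set_integral_diff set_integrable_mult_right)
  also have "\<bar>\<dots>\<bar> \<le> (LINT x:{0..}|lborel. \<bar>(\<phi> x - \<phi> xc) * weight t x\<bar>)"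
    using set_integral_norm_bound[OF int_diff] by simp
  also have "\<dots> \<le> (LINT x:{0..}|lborel. \<epsilon> * weight t x + 2 * B * exp (m * t) * n0 x)"
    using int_diff int_bound pointwise
    by (intro set_integral_mono) (auto simp: set_integrable_abs)
  also have "\<dots> = \<epsilon> * mass t + 2 * B * exp (m * t) * (LINT x:{0..}|lborel. n0 x)"
    using int_w n0_int by (simp add: mass_def set_integral_add set_integrable_mult_right)
  finally show ?thesis .
qed

lemma moment_concentrates:
  assumes \<phi>_cont: "continuous_on {0..} \<phi>" and \<phi>_bounded: "bounded (\<phi> ` {0..})"
  shows "((\<lambda>t. moment \<phi> t / mass t) \<longlongrightarrow> \<phi> xc) at_top"
  unfolding tendsto_iff
proof (intro allI impI)
  fix e :: real assume "e > 0"
  obtain B where B: "\<forall>x\<ge>0. \<bar>\<phi> x\<bar> \<le> B"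
    using \<phi>_bounded unfolding bounded_iff by auto
  obtain \<delta> where "\<delta> > 0" and near: "\<forall>x\<ge>0. \<bar>x - xc\<bar> < \<delta> \<longrightarrow> \<bar>\<phi> x - \<phi> xc\<bar> \<le> e / 2"
    using \<phi>_cont \<open>e > 0\<close> xc_pos unfolding continuous_on_iff
    by (metis atLeast_iff dist_real_def half_gt_zero less_eq_real_def)
  obtain m where "m < R xc" and far: "\<forall>x\<ge>0. \<delta> \<le> \<bar>x - xc\<bar> \<longrightarrow> R x \<le> m"
    using gap \<open>\<delta> > 0\<close> by blast
  define \<beta> where "\<beta> = (m + R xc) / 2"
  obtain J where "J > 0" and J: "\<forall>t\<ge>0. J * exp (\<beta> * t) \<le> mass t"
    using mass_lower_bound[of \<beta>] \<open>m < R xc\<close> by (auto simp: \<beta>_def)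
  define C where "C = 2 * B * (LINT x:{0..}|lborel. n0 x) / J"
  have "((\<lambda>t. C * exp ((m - \<beta>) * t)) \<longlongrightarrow> 0) at_top"
    using \<open>m < R xc\<close> unfolding \<beta>_def by real_asymp
  then have "\<forall>\<^sub>F t in at_top. C * exp ((m - \<beta>) * t) < e / 2"
    using \<open>e > 0\<close> by (intro order_tendstoD) auto
  then show "\<forall>\<^sub>F t in at_top. dist (moment \<phi> t / mass t) (\<phi> xc) < e"
    using eventually_ge_at_top[of 0]
  proof eventually_elim
    case (elim t)
    have "0 < J * exp (\<beta> * t)" using \<open>J > 0\<close> by simp
    have "J * exp (\<beta> * t) \<le> mass t" using J \<open>t \<ge> 0\<close> by blast
    have "2 * B * exp (m * t) * (LINT x:{0..}|lborel. n0 x) = C * exp ((m - \<beta>) * t) * (J * exp (\<beta> * t))"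
      using \<open>J > 0\<close> by (simp add: C_def field_simps flip: exp_add)
    also have "\<dots> < e / 2 * (J * exp (\<beta> * t))"
      using elim \<open>0 < J * exp (\<beta> * t)\<close> by (intro mult_strict_right_mono) auto
    also have "\<dots> \<le> e / 2 * mass t"
      using \<open>J * exp (\<beta> * t) \<le> mass t\<close> \<open>e > 0\<close> by simp
    finally have "\<bar>moment \<phi> t - \<phi> xc * mass t\<bar> < e / 2 * mass t + e / 2 * mass t"
      using moment_error_bound[OF \<open>t \<ge> 0\<close> \<phi>_cont B near far] \<open>e > 0\<close> by linarith
    moreover have "0 < mass t"
      using \<open>0 < J * exp (\<beta> * t)\<close> \<open>J * exp (\<beta> * t) \<le> mass t\<close> by linarith
    ultimately show ?case
      using \<open>e > 0\<close>
      by (simp add: dist_real_def field_simps abs_divide pos_divide_less_eq)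
  qed
qed


lemma mass_exponential_growth:
  assumes "R xc > 0"
  shows "\<exists>a>0. \<exists>C>0. \<forall>t\<ge>0. C * exp (a * t) \<le> mass t"
proof -
  obtain C where "C > 0" "\<forall>t\<ge>0. C * exp (R xc / 2 * t) \<le> mass t"
    using mass_lower_bound[of "R xc / 2"] assms by auto
  then show ?thesis using assms by (intro exI[of _ "R xc / 2"] exI[of _ C]) auto
qed

lemma mass_tendsto_at_top:
  assumes "R xc > 0"
  shows "filterlim mass at_top at_top"
proof -
  obtain a C where "a > 0" "C > 0" and growth: "\<forall>t\<ge>0. C * exp (a * t) \<le> mass t"
    using mass_exponential_growth assms by blast
  have "filterlim (\<lambda>t. C * exp (a * t)) at_top at_top"
    using \<open>a > 0\<close> \<open>C > 0\<close> by real_asymp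
  moreover have "\<forall>\<^sub>F t in at_top. C * exp (a * t) \<le> mass t"
    using growth by (intro eventually_at_top_linorderI[of 0]) blast
  ultimately show ?thesis by (rule filterlim_at_top_mono)
qed
end

lemma peaked_growth_net_rate:
  fixes r d mu n0 :: "real \<Rightarrow> real"
  assumes lip: "\<exists>L. L-lipschitz_on {0..} r" "\<exists>L. L-lipschitz_on {0..} d" "\<exists>L. L-lipschitz_on {0..} mu"
    and r_inf: "(r \<longlongrightarrow> 0) at_top" and d0_pos: "d 0 > 0"
    and d_deriv: "\<forall>x\<ge>0. \<exists>D. (d has_real_derivative D) (at x within {0..}) \<and> D > 0"
    and mu_pos: "\<forall>x\<ge>0. mu x > 0"
    and xc_pos: "xc > 0"
    and xc_max: "\<forall>x\<ge>0. x \<noteq> xc \<longrightarrow> r x - d x - mu x < r xc - d xc - mu xc"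
    and Rc_pos: "r xc - d xc - mu xc > 0"
    and n0_pos: "\<forall>x\<ge>0. n0 x > 0" and n0_int: "set_integrable lborel {0..} n0"
  shows "peaked_growth (\<lambda>x. r x - d x - mu x) n0 xc"
proof
  obtain Lr Ld Lmu where "Lr-lipschitz_on {0..} r" "Ld-lipschitz_on {0..} d" "Lmu-lipschitz_on {0..} mu"
    using lip by blast
  then show "continuous_on {0..} (\<lambda>x. r x - d x - mu x)"
    by (intro continuous_intros lipschitz_on_continuous_on)
  have d_mono: "d 0 \<le> d x" if "x \<ge> 0" for x
  proof (rule nondecreasing_if_derivative_within_nonneg[OF that])
    show "\<forall>y\<in>{0..x}. \<exists>D\<ge>0. (d has_real_derivative D) (at y within {0..})"
      using d_deriv by (meson atLeastAtMost_iff less_imp_le)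
  qed auto
  have "\<forall>\<^sub>F x in at_top. r x < d 0"
    using r_inf d0_pos by (intro order_tendstoD) auto
  then have "\<forall>\<^sub>F x in at_top. r x - d x - mu x \<le> 0"
    using eventually_ge_at_top[of 0]
    by eventually_elim (use d_mono mu_pos in \<open>smt (verit)\<close>)
  then show "\<exists>b<r xc - d xc - mu xc. \<forall>\<^sub>F x in at_top. r x - d x - mu x \<le> b"
    using Rc_pos by blast
qed (use xc_pos xc_max n0_pos n0_int in auto)

theorem lemma2p3:
  fixes r d mu n0 :: "real \<Rightarrow> real" and n :: "real \<Rightarrow> real \<Rightarrow> real"
    and c xc :: real
  assumes r_lip: "\<exists>L. L-lipschitz_on {0..} r"
    and d_lip: "\<exists>L. L-lipschitz_on {0..} d"
    and mu_lip: "\<exists>L. L-lipschitz_on {0..} mu"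
    and r0_d0: "r 0 > d 0" and d0_pos: "d 0 > 0"
    and r_deriv: "\<forall>x\<ge>0. \<exists>D. (r has_real_derivative D) (at x within {0..}) \<and> D < 0"
    and r_inf: "(r \<longlongrightarrow> 0) at_top"
    and d_deriv: "\<forall>x\<ge>0. \<exists>D. (d has_real_derivative D) (at x within {0..}) \<and> D > 0"
    and mu_pos: "\<forall>x\<ge>0. mu x > 0"
    and mu_deriv: "\<forall>x\<ge>0. \<exists>D. (mu has_real_derivative D) (at x within {0..}) \<and> D < 0"
    and mu_inf: "(mu \<longlongrightarrow> 0) at_top"
    and c_def: "c = 1"
    and xc_pos: "xc > 0"
    and xc_max: "\<forall>x\<ge>0. x \<noteq> xc \<longrightarrow> r x - d x - c * mu x < r xc - d xc - c * mu xc"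
    and Rc_pos: "r xc - d xc - c * mu xc > 0"
    and n0_pos: "\<forall>x\<ge>0. n0 x > 0"
    and n0_int: "set_integrable lborel {0..} n0"
    and n_init: "\<forall>x\<ge>0. n x 0 = n0 x"
    and n_ode: "\<forall>x\<ge>0. \<forall>t\<ge>0. ((\<lambda>s. n x s) has_real_derivative
                   (r x - d x - c * mu x) * n x t) (at t within {0..})"
  shows "filterlim (\<lambda>t. LINT x:{0..}|lborel. n x t) at_top at_top
    \<and> (\<exists>a>0. \<exists>C>0. \<forall>\<^sub>F t in at_top. C * exp (a * t) \<le> (LINT x:{0..}|lborel. n x t))
    \<and> (\<forall>\<phi>::real \<Rightarrow> real. continuous_on {0..} \<phi> \<longrightarrow> bounded (\<phi> ` {0..}) \<longrightarrow>
         ((\<lambda>t. (LINT x:{0..}|lborel. \<phi> x * n x t) / (LINT x:{0..}|lborel. n x t))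
            \<longlongrightarrow> \<phi> xc) at_top)"
proof -
  define R where "R x = r x - d x - mu x" for x
  interpret peaked_growth R n0 xc
    unfolding R_def using assms by (intro peaked_growth_net_rate) simp_all
  have n_explicit: "n x t = weight t x" if "x \<ge> 0" "t \<ge> 0" for x t
    using linear_ode_solution[of "n x" "R x" t] n_ode n_init c_def that by (simp add: R_def weight_def)
  have total: "\<forall>\<^sub>F t in at_top. (LINT x:{0..}|lborel. n x t) = mass t"
    using eventually_ge_at_top[of 0]
    by eventually_elim (auto simp: mass_def n_explicit intro: set_lebesgue_integral_cong)
  have moments: "\<forall>\<^sub>F t in at_top. (LINT x:{0..}|lborel. \<phi> x * n x t) = moment \<phi> t" for \<phi>
    using eventually_ge_at_top[of 0]
    by eventually_elim (auto simp: moment_def n_explicit intro: set_lebesgue_integral_cong)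
  have "R xc > 0" using Rc_pos c_def by (simp add: R_def)
  obtain a C where "a > 0" "C > 0" and growth: "\<forall>t\<ge>0. C * exp (a * t) \<le> mass t"
    using mass_exponential_growth \<open>R xc > 0\<close> by blast
  have "\<forall>\<^sub>F t in at_top. C * exp (a * t) \<le> (LINT x:{0..}|lborel. n x t)"
    using total eventually_ge_at_top[of 0] by eventually_elim (use growth in auto)
  moreover have "filterlim (\<lambda>t. LINT x:{0..}|lborel. n x t) at_top at_top"
    using filterlim_cong[OF refl refl total] mass_tendsto_at_top \<open>R xc > 0\<close> by blast
  moreover have "((\<lambda>t. (LINT x:{0..}|lborel. \<phi> x * n x t) / (LINT x:{0..}|lborel. n x t)) \<longlongrightarrow> \<phi> xc) at_top"
    if "continuous_on {0..} \<phi>" "bounded (\<phi> ` {0..})" for \<phi> :: "real \<Rightarrow> real"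
  proof (rule Lim_transform_eventually[OF moment_concentrates[OF that]])
    show "\<forall>\<^sub>F t in at_top. moment \<phi> t / mass t
        = (LINT x:{0..}|lborel. \<phi> x * n x t) / (LINT x:{0..}|lborel. n x t)"
      using total moments[of \<phi>] by eventually_elim simp
  qed
  ultimately show ?thesis
    using \<open>a > 0\<close> \<open>C > 0\<close> by blast
qed

end
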